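(* Let $\alpha=[0;a_1,a_2,\ldots]\in\mathbf{Bad}$ and let $(p_n/q_n)_{n\ge1}$ be the sequence of its convergents. Assume that there exist a positive rational number $x$ and a sequence of finite words $(U_k)_{k\ge1}$ over the positive integers such that, for every $k\ge1$, the sequence of partial quotients $a_1a_2\ldots$ of $\alpha$ begins with the word $U_kU_k^x$, and $|U_{k+1}|>|U_k|$. Set $M=\limsup_{\ell\to+\infty}q_\ell^{1/\ell}$ and $m=\liminf_{\ell\to+\infty}q_\ell^{1/\ell}$. If $$x\ge1\quad\text{or}\quad x>\frac12\cdot\frac{\log M}{\log m},$$ then for every real number $\beta$ equal to $\alpha$ up to a rational homography one has $\inf_{q\ge1}q\cdot\Vert q\alpha\Vert\cdot\Vert q\beta\Vert=0$.
   Context: For a real number $y$, $\Vert y\Vert$ denotes the distance from $y$ to the nearest integer. $\mathbf{Bad}=\{\alpha\in\mathbb{R} : \inf_{q\ge1} q\Vert q\alpha\Vert>0\}$ (equivalently, real numbers with bounded partial quotients). A finite word $W=w_1\ldots w_r$ over the positive integers is identified with the sequence of partial quotients $w_1,\ldots,w_r$; $|W|$ denotes its length. For a positive rational $x$, $W^x$ denotes the word $W^{[x]}W'$, where $W^{[x]}$ is the concatenation of $[x]$ copies of $W$ and $W'$ is the prefix of $W$ of length $\lceil (x-[x])|W|\rceil$. A real number $\beta$ is equal to $\alpha$ up to a rational homography if $\beta=(a\alpha+b)/(c\alpha+d)$ for some integers $a,b,c,d$ with $ad-bc\neq0$. *)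

theory Defs
  imports "HOL-Analysis.Analysis"
begin

definition nint_dist :: "real \<Rightarrow> real" where
  "nint_dist y = \<bar>y - of_int (round y)\<bar>"

definition Bad :: "real set" where
  "Bad = {\<alpha>. (INF q\<in>{1::nat..}. real q * nint_dist (real q * \<alpha>)) > 0}"

text \<open>Numerators and denominators of the convergents of [0; a 1, a 2, ...]
  (the partial quotients are a 1, a 2, ...; a 0 is unused, a_0 = 0).\<close>
fun cf_p :: "(nat \<Rightarrow> nat) \<Rightarrow> nat \<Rightarrow> nat" where
  "cf_p a 0 = 0"
| "cf_p a (Suc 0) = 1"
| "cf_p a (Suc (Suc n)) = a (Suc (Suc n)) * cf_p a (Suc n) + cf_p a n"

fun cf_q :: "(nat \<Rightarrow> nat) \<Rightarrow> nat \<Rightarrow> nat" where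
  "cf_q a 0 = 1"
| "cf_q a (Suc 0) = a (Suc 0)"
| "cf_q a (Suc (Suc n)) = a (Suc (Suc n)) * cf_q a (Suc n) + cf_q a n"

definition word_pow :: "nat list \<Rightarrow> rat \<Rightarrow> nat list" where
  "word_pow W x = concat (replicate (nat \<lfloor>x\<rfloor>) W) @
     take (nat \<lceil>(x - of_int \<lfloor>x\<rfloor>) * of_nat (length W)\<rceil>) W"

definition cf_begins_with :: "(nat \<Rightarrow> nat) \<Rightarrow> nat list \<Rightarrow> bool" where
  "cf_begins_with a W \<longleftrightarrow> (\<forall>i<length W. a (Suc i) = W ! i)"

end

theory Submission
  imports Defs
begin

text \<open>
  If the expansion of \<alpha> begins with U U^x, where |U| = r and |U^x| = s, then a_(r+i) = a_i
  for 1 \<le> i \<le> s, and the recurrences for the convergents give q_(r+s) = q_r q_s + q_(r-1) p_s.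
  Hence the integer polynomial P(X) = q_(r-1) X^2 + (q_r - p_(r-1)) X - p_r satisfies
  q_(r-1)^2 |P(\<alpha>)| \<le> 2 q_r / q_s^2, and its middle coefficient is O(q_(r-1)) because \<alpha> is
  badly approximable. Along the words U_k the ratio q_r / q_s^2 tends to 0: for x \<ge> 1 because
  s \<ge> r gives q_r / q_s^2 \<le> 1 / q_r, otherwise because q_r / q_s^2 is roughly M^r / m^(2 x r),
  which decays exponentially when x > log M / (2 log m).

  Given an integer quadratic c X^2 + c1 X + c0 with |c1| = O(c) and c^2 |P(\<alpha>)| \<le> t^2,
  Dirichlet's theorem refined by the congruence c | c1 n + c0 m yields m \<le> c^2/t and n with
  |m \<alpha> - n| \<le> t/c. For \<beta> = (A \<alpha> + B)/(C \<alpha> + D) the integer q = C n + D m then satisfies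
  q ||q \<alpha>|| ||q \<beta>|| = O(t).
\<close>

section \<open>Badly approximable numbers\<close>

lemma nint_dist_nonneg: "nint_dist y \<ge> 0"
  by (simp add: nint_dist_def)

lemma nint_dist_le: "nint_dist y \<le> \<bar>y - of_int k\<bar>"
  unfolding nint_dist_def by (rule round_diff_minimal)

lemma nint_dist_abs_mult_le: "nint_dist (real (nat \<bar>q\<bar>) * y) \<le> \<bar>of_int q * y - of_int p\<bar>"
proof (cases "q \<ge> 0")
  case True
  then show ?thesis
    using nint_dist_le[of "of_int q * y" p] by simp
next
  case False
  then have "nint_dist (real (nat \<bar>q\<bar>) * y) \<le> \<bar>- of_int q * y - of_int (- p)\<bar>"
    using nint_dist_le[of "- of_int q * y" "- p"] by simp
  then show ?thesis
    by (simp add: abs_minus_commute)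
qed

lemma Bad_lower_bound:
  assumes "\<alpha> \<in> Bad"
  obtains c where "c > 0" and "\<And>q. q \<ge> 1 \<Longrightarrow> c \<le> real q * nint_dist (real q * \<alpha>)"
proof -
  have "bdd_below ((\<lambda>q. real q * nint_dist (real q * \<alpha>)) ` {1..})"
    using nint_dist_nonneg by (intro bdd_belowI2[of _ 0]) simp
  then show ?thesis
    using assms that[of "INF q\<in>{1::nat..}. real q * nint_dist (real q * \<alpha>)"]
    by (auto simp: Bad_def intro: cINF_lower)
qed

lemma Bad_not_rational:
  assumes "\<alpha> \<in> Bad"
  shows "\<alpha> \<notin> \<rat>"
proof
  assume "\<alpha> \<in> \<rat>"
  then obtain p q where q: "q > 0" and \<alpha>: "\<alpha> = of_int p / of_int q"
    by (auto elim: Rats_cases')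
  obtain c where c: "c > 0" "\<And>q. q \<ge> 1 \<Longrightarrow> c \<le> real q * nint_dist (real q * \<alpha>)"
    using Bad_lower_bound[OF assms] by blast
  have "real (nat q) * \<alpha> = of_int p"
    using q by (simp add: \<alpha>)
  then have "nint_dist (real (nat q) * \<alpha>) = 0"
    by (simp add: nint_dist_def)
  moreover have "nat q \<ge> 1"
    using q by simp
  ultimately show False
    using c(1) c(2)[of "nat q"] by simp
qed

lemma homography_denominator_nonzero:
  assumes "\<alpha> \<notin> \<rat>" and "A * D - B * C \<noteq> 0"
  shows "of_int C * \<alpha> + of_int D \<noteq> 0"
proof
  assume zero: "of_int C * \<alpha> + of_int D = 0"
  show False
  proof (cases "C = 0")
    case True
    then show False
      using zero assms(2) by simp
  next
    case False
    have "of_int C * \<alpha> = - of_int D"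
      using zero by (simp add: eq_neg_iff_add_eq_0)
    then have "\<alpha> = - of_int D / of_int C"
      using False by (simp add: field_simps)
    then show False
      using assms(1) by simp
  qed
qed

section \<open>Convergents\<close>

locale cf_denominators =
  fixes a :: "nat \<Rightarrow> nat"
  assumes partial_quotients_pos: "\<forall>n\<ge>1. a n \<ge> 1"
begin

lemma partial_quotient_Suc_pos [simp]: "Suc 0 \<le> a (Suc n)"
  using partial_quotients_pos by simp

lemma cf_q_pos: "cf_q a n \<ge> 1"
  by (induction n rule: induct_nat_012) auto

lemma cf_q_le_Suc: "cf_q a n \<le> cf_q a (Suc n)"
  by (induction n rule: induct_nat_012) (auto intro: le_SucI trans_le_add1)

lemma cf_q_mono: "i \<le> j \<Longrightarrow> cf_q a i \<le> cf_q a j"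
  by (rule lift_Suc_mono_le[of "cf_q a"]) (rule cf_q_le_Suc)

lemma cf_q_ge_power2: "2 ^ (n div 2) \<le> cf_q a n"
proof (induction n rule: induct_nat_012)
  case (ge2 n)
  have "2 * 2 ^ (n div 2) \<le> cf_q a (Suc n) + cf_q a n"
    using ge2.IH(1) cf_q_le_Suc[of n] by linarith
  also have "\<dots> \<le> cf_q a (Suc (Suc n))"
    by simp
  finally show ?case by simp
qed (use cf_q_pos in auto)

lemma cf_p_le_cf_q: "cf_p a n \<le> cf_q a n"
  by (induction n rule: induct_nat_012) (auto intro: add_mono mult_left_mono)

lemma cf_q_le_power:
  assumes c: "c > 0" and decay: "\<And>n. c * real (cf_q a (Suc n)) \<le> real (cf_q a n)"
  shows "real (cf_q a n) \<le> (1 / c) ^ n"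
proof (induction n)
  case (Suc n)
  have "real (cf_q a (Suc n)) \<le> real (cf_q a n) / c"
    using decay[of n] c by (simp add: field_simps)
  also have "\<dots> \<le> (1 / c) ^ n / c"
    using Suc c by (intro divide_right_mono) auto
  finally show ?case
    by (simp add: field_simps)
qed simp

end

lemma cf_p_cf_q_det:
  "int (cf_p a (Suc n)) * int (cf_q a n) - int (cf_p a n) * int (cf_q a (Suc n)) = (-1) ^ n"
  by (induction n) (simp_all add: algebra_simps)

lemma cf_shift_periodic:
  assumes r: "r \<ge> 1" and periodic: "\<forall>i\<in>{1..s}. a (r + i) = a i"
  shows "cf_q a (r + s) = cf_q a r * cf_q a s + cf_q a (r - 1) * cf_p a s"
    and "cf_p a (r + s) = cf_p a r * cf_q a s + cf_p a (r - 1) * cf_p a s"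
proof -
  have "cf_q a (r + s) = cf_q a r * cf_q a s + cf_q a (r - 1) * cf_p a s \<and>
        cf_p a (r + s) = cf_p a r * cf_q a s + cf_p a (r - 1) * cf_p a s"
    using periodic
  proof (induction s rule: induct_nat_012)
    case 1
    obtain r' where "r = Suc r'" using r by (cases r) auto
    with "1.prems" show ?case by (simp add: algebra_simps)
  next
    case (ge2 s)
    have "a (Suc (Suc (r + s))) = a (Suc (Suc s))"
      using ge2.prems by (metis add_Suc_right atLeastAtMost_iff le_add1 le_refl plus_1_eq_Suc)
    with ge2 show ?case by (simp add: algebra_simps)
  qed simp
  then show "cf_q a (r + s) = cf_q a r * cf_q a s + cf_q a (r - 1) * cf_p a s"
    and "cf_p a (r + s) = cf_p a r * cf_q a s + cf_p a (r - 1) * cf_p a s"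
    by auto
qed

lemma periodic_quadratic_identity:
  fixes \<alpha> :: real
  assumes "r \<ge> 1" and "\<forall>i\<in>{1..s}. a (r + i) = a i"
  shows "real (cf_q a s) * (real (cf_q a (r - 1)) * \<alpha>\<^sup>2 + (real (cf_q a r) - real (cf_p a (r - 1))) * \<alpha>
           - real (cf_p a r))
         = (real (cf_q a (r + s)) * \<alpha> - real (cf_p a (r + s)))
           + (real (cf_q a s) * \<alpha> - real (cf_p a s)) * (real (cf_q a (r - 1)) * \<alpha> - real (cf_p a (r - 1)))"
  using cf_shift_periodic[OF assms] by (simp add: algebra_simps power2_eq_square)

lemma alternating_sum_between:
  fixes f :: "nat \<Rightarrow> real"
  assumes "\<And>i. f (Suc i) \<le> f i" and "\<And>i. 0 \<le> f i"
  shows "(\<Sum>i<N. (-1) ^ i * f i) \<in> {0..f 0}"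
  using assms
proof (induction N arbitrary: f)
  case (Suc N)
  have "(\<Sum>i<N. (-1) ^ i * f (Suc i)) \<in> {0..f 1}"
    using Suc.IH[of "\<lambda>i. f (Suc i)"] Suc.prems by auto
  moreover have "(\<Sum>i<Suc N. (-1) ^ i * f i) = f 0 - (\<Sum>i<N. (-1) ^ i * f (Suc i))"
    by (subst sum.lessThan_Suc_shift) (simp add: sum_negf[symmetric])
  ultimately show ?case
    using Suc.prems[of 0] by auto
qed simp

locale cf_expansion = cf_denominators +
  fixes \<alpha> :: real
  assumes convergents_tendsto: "(\<lambda>n. real (cf_p a n) / real (cf_q a n)) \<longlonglongrightarrow> \<alpha>"
begin

lemma convergent_Suc_diff:
  "real (cf_p a (Suc n)) / real (cf_q a (Suc n)) - real (cf_p a n) / real (cf_q a n)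
     = (-1) ^ n / (real (cf_q a n) * real (cf_q a (Suc n)))"
proof -
  have "real (cf_p a (Suc n)) * real (cf_q a n) - real (cf_p a n) * real (cf_q a (Suc n)) = (-1) ^ n"
    using arg_cong[OF cf_p_cf_q_det[of a n], of real_of_int] by simp
  moreover have "real (cf_q a n) > 0" "real (cf_q a (Suc n)) > 0"
    using cf_q_pos[of n] cf_q_pos[of "Suc n"] by auto
  ultimately show ?thesis
    by (simp add: field_simps)
qed

lemma convergents_dist:
  "\<bar>real (cf_p a (n + N)) / real (cf_q a (n + N)) - real (cf_p a n) / real (cf_q a n)\<bar>
     \<le> 1 / (real (cf_q a n) * real (cf_q a (Suc n)))"
proof -
  define c where "c i = real (cf_p a (n + i)) / real (cf_q a (n + i))" for i
  define g where "g i = 1 / (real (cf_q a (n + i)) * real (cf_q a (Suc (n + i))))" for i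
  have g_antimono: "g (Suc i) \<le> g i" for i
  proof -
    have "real (cf_q a (n + i)) * real (cf_q a (Suc (n + i)))
          \<le> real (cf_q a (Suc (n + i))) * real (cf_q a (Suc (Suc (n + i))))"
      using cf_q_le_Suc[of "n + i"] cf_q_le_Suc[of "Suc (n + i)"]
      by (intro mult_mono) (auto simp del: cf_q.simps)
    then show ?thesis
      unfolding g_def using cf_q_pos[of "n + i"] cf_q_pos[of "Suc (n + i)"] cf_q_pos[of "Suc (Suc (n + i))"]
      by (intro divide_left_mono mult_pos_pos) (auto simp del: cf_q.simps)
  qed
  have "c N - c 0 = (\<Sum>i<N. c (Suc i) - c i)"
    by (rule sum_lessThan_telescope[symmetric])
  also have "\<dots> = (-1) ^ n * (\<Sum>i<N. (-1) ^ i * g i)"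
    unfolding c_def g_def sum_distrib_left
    by (intro sum.cong) (simp_all add: convergent_Suc_diff power_add)
  finally have "\<bar>c N - c 0\<bar> = \<bar>\<Sum>i<N. (-1) ^ i * g i\<bar>"
    by (simp add: abs_mult)
  also have "\<dots> \<le> g 0"
    using alternating_sum_between[of g N] g_antimono by (auto simp: g_def)
  finally show ?thesis
    by (simp add: c_def g_def)
qed

lemma cf_approx_error: "\<bar>real (cf_q a n) * \<alpha> - real (cf_p a n)\<bar> \<le> 1 / real (cf_q a (Suc n))"
proof -
  have q_pos: "real (cf_q a n) > 0"
    using cf_q_pos[of n] by simp
  have "(\<lambda>N. \<bar>real (cf_p a (n + N)) / real (cf_q a (n + N)) - real (cf_p a n) / real (cf_q a n)\<bar>)
          \<longlonglongrightarrow> \<bar>\<alpha> - real (cf_p a n) / real (cf_q a n)\<bar>"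
    using LIMSEQ_ignore_initial_segment[OF convergents_tendsto, of n]
    by (intro tendsto_intros) (simp add: add.commute)
  then have "\<bar>\<alpha> - real (cf_p a n) / real (cf_q a n)\<bar> \<le> 1 / (real (cf_q a n) * real (cf_q a (Suc n)))"
    by (rule LIMSEQ_le_const2) (use convergents_dist in auto)
  then have "real (cf_q a n) * \<bar>\<alpha> - real (cf_p a n) / real (cf_q a n)\<bar> \<le> 1 / real (cf_q a (Suc n))"
    using q_pos by (simp add: field_simps)
  moreover have "real (cf_q a n) * \<bar>\<alpha> - real (cf_p a n) / real (cf_q a n)\<bar>
                   = \<bar>real (cf_q a n) * \<alpha> - real (cf_p a n)\<bar>"
    using q_pos by (simp add: abs_mult[symmetric] field_simps)
  ultimately show ?thesis
    by simp
qed

lemma Bad_cf_q_Suc_le: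
  assumes "\<And>q. q \<ge> 1 \<Longrightarrow> c \<le> real q * nint_dist (real q * \<alpha>)"
  shows "c * real (cf_q a (Suc n)) \<le> real (cf_q a n)"
proof -
  have q_pos: "real (cf_q a n) \<ge> 1" "real (cf_q a (Suc n)) \<ge> 1"
    using cf_q_pos[of n] cf_q_pos[of "Suc n"] by simp_all
  have "c \<le> real (cf_q a n) * nint_dist (real (cf_q a n) * \<alpha>)"
    using assms cf_q_pos by simp
  also have "\<dots> \<le> real (cf_q a n) * \<bar>real (cf_q a n) * \<alpha> - of_int (int (cf_p a n))\<bar>"
    using q_pos by (intro mult_left_mono nint_dist_le) auto
  also have "\<dots> \<le> real (cf_q a n) * (1 / real (cf_q a (Suc n)))"
    using q_pos cf_approx_error[of n] by (intro mult_left_mono) auto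
  finally show ?thesis
    using q_pos by (simp add: field_simps)
qed

lemma periodic_quadratic_approx:
  assumes r: "r \<ge> 1" and s: "s \<ge> 1" and periodic: "\<forall>i\<in>{1..s}. a (r + i) = a i"
  shows "real (cf_q a (r - 1)) ^ 2 * \<bar>real (cf_q a (r - 1)) * \<alpha>\<^sup>2 + (real (cf_q a r) - real (cf_p a (r - 1))) * \<alpha>
            - real (cf_p a r)\<bar> \<le> 2 * real (cf_q a r) / real (cf_q a s) ^ 2"
proof -
  define Q where "Q j = real (cf_q a j)" for j
  define d where "d j = Q j * \<alpha> - real (cf_p a j)" for j
  define P where "P = Q (r - 1) * \<alpha>\<^sup>2 + (Q r - real (cf_p a (r - 1))) * \<alpha> - real (cf_p a r)"
  have Q_pos: "Q j \<ge> 1" for j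
    using cf_q_pos[of j] by (simp add: Q_def)
  have Q_mono: "Q i \<le> Q j" if "i \<le> j" for i j
    using cf_q_mono[OF that] by (simp add: Q_def)
  have d: "\<bar>d j\<bar> \<le> 1 / Q (Suc j)" for j
    using cf_approx_error by (simp add: d_def Q_def)
  have "cf_q a r * cf_q a s \<le> cf_q a (Suc (r + s))"
    using cf_shift_periodic(1)[OF r periodic] cf_q_le_Suc[of "r + s"] by linarith
  then have "Q r * Q s \<le> Q (Suc (r + s))"
    by (simp add: Q_def flip: of_nat_mult)
  then have "1 / Q (Suc (r + s)) \<le> 1 / (Q r * Q s)"
    using Q_pos[of r] Q_pos[of s] Q_pos[of "Suc (r + s)"] by (intro divide_left_mono mult_pos_pos) auto
  then have d_rs: "\<bar>d (r + s)\<bar> \<le> 1 / (Q r * Q s)"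
    using d[of "r + s"] by linarith
  have "1 / Q (Suc s) \<le> 1 / Q s"
    using Q_mono[of s "Suc s"] Q_pos[of s] by (intro divide_left_mono) auto
  then have "\<bar>d s\<bar> * \<bar>d (r - 1)\<bar> \<le> 1 / Q s * (1 / Q r)"
    using d[of s] d[of "r - 1"] r Q_pos[of s] by (intro mult_mono) auto
  then have d_s_r: "\<bar>d s\<bar> * \<bar>d (r - 1)\<bar> \<le> 1 / (Q r * Q s)"
    by (simp add: mult.commute)
  have "Q s * P = d (r + s) + d s * d (r - 1)"
    using periodic_quadratic_identity[OF r periodic] by (simp add: P_def d_def Q_def)
  then have "Q s * \<bar>P\<bar> = \<bar>d (r + s) + d s * d (r - 1)\<bar>"
    using Q_pos[of s] by (metis abs_mult abs_of_nonneg order_trans zero_le_one)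
  also have "\<dots> \<le> \<bar>d (r + s)\<bar> + \<bar>d s\<bar> * \<bar>d (r - 1)\<bar>"
    by (metis abs_mult abs_triangle_ineq)
  also have "\<dots> \<le> 1 / (Q r * Q s) + 1 / (Q r * Q s)"
    using d_rs d_s_r by (rule add_mono)
  finally have "Q s * \<bar>P\<bar> \<le> 2 / (Q r * Q s)"
    by simp
  then have "Q r ^ 2 * \<bar>P\<bar> \<le> 2 * Q r / Q s ^ 2"
    using Q_pos[of s] Q_pos[of r] by (simp add: field_simps power2_eq_square)
  moreover have "Q (r - 1) ^ 2 * \<bar>P\<bar> \<le> Q r ^ 2 * \<bar>P\<bar>"
    using Q_mono[of "r - 1" r] Q_pos[of "r - 1"] by (simp add: mult_right_mono power_mono)
  ultimately show ?thesis
    by (simp add: P_def Q_def)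
qed

lemma periodic_quadratic_approx_coeffs:
  assumes c: "c > 0" "\<And>n. c * real (cf_q a (Suc n)) \<le> real (cf_q a n)"
    and r: "r \<ge> 1" and s: "s \<ge> 1" and periodic: "\<forall>i\<in>{1..s}. a (r + i) = a i"
  shows "\<exists>(c2::nat) (c1::int) (c0::int). c2 \<ge> 1 \<and> \<bar>of_int c1\<bar> \<le> 1 / c * real c2 \<and>
           real c2 ^ 2 * \<bar>real c2 * \<alpha>\<^sup>2 + of_int c1 * \<alpha> + of_int c0\<bar>
             \<le> 2 * real (cf_q a r) / real (cf_q a s) ^ 2"
proof (intro exI conjI)
  show "cf_q a (r - 1) \<ge> 1"
    by (rule cf_q_pos)
  have "cf_p a (r - 1) \<le> cf_q a r"
    using cf_p_le_cf_q[of "r - 1"] cf_q_mono[of "r - 1" r] by simp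
  then have "\<bar>real_of_int (int (cf_q a r) - int (cf_p a (r - 1)))\<bar> \<le> real (cf_q a r)"
    by simp
  also have "\<dots> \<le> 1 / c * real (cf_q a (r - 1))"
    using c(2)[of "r - 1"] c(1) r by (simp add: field_simps)
  finally show "\<bar>real_of_int (int (cf_q a r) - int (cf_p a (r - 1)))\<bar> \<le> 1 / c * real (cf_q a (r - 1))" .
  show "real (cf_q a (r - 1)) ^ 2 * \<bar>real (cf_q a (r - 1)) * \<alpha>\<^sup>2
          + real_of_int (int (cf_q a r) - int (cf_p a (r - 1))) * \<alpha> + real_of_int (- int (cf_p a r))\<bar>
          \<le> 2 * real (cf_q a r) / real (cf_q a s) ^ 2"
    using periodic_quadratic_approx[OF r s periodic] by simp
qed

end

section \<open>Rational powers of words\<close>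

lemma nth_concat_replicate_append_take:
  assumes "W \<noteq> []" and "i < length (concat (replicate n W) @ take t W)"
  shows "(concat (replicate n W) @ take t W) ! i = W ! (i mod length W)"
  using assms(2)
proof (induction n arbitrary: i)
  case (Suc n)
  show ?case
  proof (cases "i < length W")
    case False
    then have "(concat (replicate (Suc n) W) @ take t W) ! i
                 = (concat (replicate n W) @ take t W) ! (i - length W)"
      by (simp add: nth_append)
    also have "\<dots> = W ! (i mod length W)"
      using Suc False by (simp add: le_mod_geq)
    finally show ?thesis .
  qed (simp add: nth_append)
qed simp

lemma length_word_pow_ge:
  assumes "x > 0"
  shows "real_of_rat x * real (length W) \<le> real (length (word_pow W x))"
proof -
  define f where "f = \<lfloor>x\<rfloor>"
  define t where "t = nat \<lceil>(x - of_int f) * of_nat (length W)\<rceil>"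
  have frac: "0 \<le> x - of_int f" "x - of_int f < 1"
    by (simp_all add: f_def floor_less_cancel)
  then have "(x - of_int f) * of_nat (length W) \<le> of_nat (length W)"
    by (simp add: mult_left_le_one_le)
  then have "\<lceil>(x - of_int f) * of_nat (length W)\<rceil> \<le> int (length W)"
    by (simp add: ceiling_le_iff)
  then have t_le: "t \<le> length W"
    by (simp add: t_def)
  have "x * of_nat (length W) = of_int f * of_nat (length W) + (x - of_int f) * of_nat (length W)"
    by (simp add: algebra_simps)
  also have "\<dots> \<le> of_int f * of_nat (length W) + of_nat t"
    using frac by (simp add: t_def)
  also have "\<dots> = of_nat (nat f * length W + t)"
    using assms by (simp add: f_def)
  also have "nat f * length W + t = length (word_pow W x)"
    using t_le by (simp add: word_pow_def f_def t_def length_concat sum_list_replicate)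
  finally have "x * of_nat (length W) \<le> of_nat (length (word_pow W x))" .
  then show ?thesis
    by (metis of_rat_less_eq of_rat_mult of_rat_of_nat_eq)
qed

lemma cf_begins_with_word_pow_periodic:
  assumes prefix: "cf_begins_with a (W @ word_pow W x)" and W: "W \<noteq> []"
  shows "\<forall>i\<in>{1..length (word_pow W x)}. a (length W + i) = a i"
proof -
  define t where "t = nat \<lceil>(x - of_int \<lfloor>x\<rfloor>) * of_nat (length W)\<rceil>"
  have word: "W @ word_pow W x = concat (replicate (Suc (nat \<lfloor>x\<rfloor>)) W) @ take t W"
    by (simp add: word_pow_def t_def)
  have a: "a (Suc i) = W ! (i mod length W)" if "i < length W + length (word_pow W x)" for i
    using prefix that nth_concat_replicate_append_take[OF W, of i "Suc (nat \<lfloor>x\<rfloor>)" t]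
    unfolding cf_begins_with_def word[symmetric] by simp
  show ?thesis
  proof
    fix i
    assume "i \<in> {1..length (word_pow W x)}"
    then obtain j where j: "i = Suc j" "j < length (word_pow W x)"
      by (cases i) auto
    then show "a (length W + i) = a i"
      using a[of "length W + j"] a[of j] by simp
  qed
qed

section \<open>Growth of the denominators\<close>

lemma filterlim_at_top_if_Suc_less:
  fixes f :: "nat \<Rightarrow> nat"
  assumes "\<And>k. k \<ge> 1 \<Longrightarrow> f k < f (Suc k)"
  shows "filterlim f at_top sequentially"
proof -
  have "strict_mono (\<lambda>k. f (Suc k))"
    using assms by (simp add: strict_mono_Suc_iff)
  then have "filterlim (\<lambda>k. f (Suc k)) at_top sequentially"
    by (rule filterlim_subseq)
  then show ?thesis
    by (simp add: filterlim_sequentially_Suc)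
qed

lemma ratio_tendsto_0_if_mono:
  fixes Q :: "nat \<Rightarrow> real" and r L :: "nat \<Rightarrow> nat"
  assumes Q_pos: "\<And>l. Q l > 0" and Q_mono: "mono Q" and Q_top: "filterlim Q at_top sequentially"
    and r: "filterlim r at_top sequentially" and rL: "\<And>k. r k \<le> L k"
  shows "(\<lambda>k. Q (r k) / Q (L k) ^ 2) \<longlonglongrightarrow> 0"
proof (rule Lim_null_comparison)
  show "(\<lambda>k. inverse (Q (r k))) \<longlonglongrightarrow> 0"
    by (rule tendsto_inverse_0_at_top[OF filterlim_compose[OF Q_top r]])
  have "norm (Q (r k) / Q (L k) ^ 2) \<le> inverse (Q (r k))" for k
  proof -
    have "Q (r k) \<le> Q (L k)"
      using Q_mono rL by (simp add: monoD)
    then have "Q (r k) * Q (r k) \<le> Q (L k) ^ 2"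
      using Q_pos[of "r k"] by (simp add: power2_eq_square mult_mono)
    then show ?thesis
      using Q_pos[of "r k"] Q_pos[of "L k"] by (simp add: field_simps)
  qed
  then show "eventually (\<lambda>k. norm (Q (r k) / Q (L k) ^ 2) \<le> inverse (Q (r k))) sequentially"
    by simp
qed

lemma ratio_less_exp_if_rates:
  fixes A B x su sv u v :: real
  assumes "A > 0" and "B > 0" and "ln A < su * u" and "sv * v < ln B"
    and "x * u \<le> v" and "sv > 0"
  shows "A / B ^ 2 < exp (- (2 * x * sv - su) * u)"
proof -
  have "ln (A / B ^ 2) = ln A - 2 * ln B"
    using assms(1,2) by (simp add: ln_div ln_realpow)
  also have "\<dots> < su * u - 2 * (sv * (x * u))"
    using assms(3,4) mult_left_mono[OF assms(5), of sv] assms(6) by linarith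
  also have "\<dots> = - (2 * x * sv - su) * u"
    by (simp add: algebra_simps)
  finally show ?thesis
    using assms(1,2) by (metis divide_pos_pos exp_less_mono exp_ln zero_less_power)
qed

lemma ratio_tendsto_0_if_growth_rates:
  fixes Q :: "nat \<Rightarrow> real" and r L :: "nat \<Rightarrow> nat" and x su sv :: real
  assumes Q_pos: "\<And>l. Q l > 0"
    and upper: "eventually (\<lambda>l. ln (Q l) < su * real l) sequentially"
    and lower: "eventually (\<lambda>l. sv * real l < ln (Q l)) sequentially"
    and r: "filterlim r at_top sequentially" and rL: "\<And>k. x * real (r k) \<le> real (L k)"
    and x: "x > 0" and sv: "sv > 0" and rates: "su < 2 * x * sv"
  shows "(\<lambda>k. Q (r k) / Q (L k) ^ 2) \<longlonglongrightarrow> 0"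
proof (rule Lim_null_comparison)
  define g where "g = 2 * x * sv - su"
  have "filterlim (\<lambda>k. g * real (r k)) at_top sequentially"
    using filterlim_compose[OF filterlim_real_sequentially r] rates
    by (intro filterlim_tendsto_pos_mult_at_top[OF tendsto_const]) (auto simp: g_def)
  then have "filterlim (\<lambda>k. - g * real (r k)) at_bot sequentially"
    by (simp add: filterlim_uminus_at_top)
  then show "(\<lambda>k. exp (- g * real (r k))) \<longlonglongrightarrow> 0"
    by (rule filterlim_compose[OF exp_at_bot])
  obtain N where N: "\<And>l. l \<ge> N \<Longrightarrow> ln (Q l) < su * real l \<and> sv * real l < ln (Q l)"
    using eventually_conj[OF upper lower] by (auto simp: eventually_sequentially)
  have "eventually (\<lambda>k. N + nat \<lceil>real N / x\<rceil> \<le> r k) sequentially"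
    using r by (simp add: filterlim_at_top)
  then show "eventually (\<lambda>k. norm (Q (r k) / Q (L k) ^ 2) \<le> exp (- g * real (r k))) sequentially"
  proof (rule eventually_mono)
    fix k
    assume k: "N + nat \<lceil>real N / x\<rceil> \<le> r k"
    then have "real N / x \<le> real (r k)"
      by linarith
    then have "N \<le> L k"
      using rL[of k] x by (simp add: field_simps)
    then have "Q (r k) / Q (L k) ^ 2 < exp (- g * real (r k))"
      unfolding g_def using N[of "r k"] N[of "L k"] k Q_pos rL sv
      by (intro ratio_less_exp_if_rates) auto
    then show "norm (Q (r k) / Q (L k) ^ 2) \<le> exp (- g * real (r k))"
      using Q_pos[of "r k"] Q_pos[of "L k"] by simp
  qed
qed

lemma root_ge_if_ge_power2:
  fixes y :: real
  assumes lower: "2 ^ (l div 2) \<le> y" and l: "l \<ge> 2"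
  shows "2 powr (1 / 3) \<le> y powr (1 / real l)"
proof -
  have "l \<le> 3 * (l div 2)"
    using l by presburger
  then have "real l \<le> 3 * real (l div 2)"
    by linarith
  then have "(2::real) powr (1 / 3) \<le> 2 powr (real (l div 2) / real l)"
    using l by (intro powr_mono) (simp_all add: field_simps)
  also have "\<dots> = (2 ^ (l div 2)) powr (1 / real l)"
    by (simp add: powr_powr powr_realpow[symmetric])
  also have "\<dots> \<le> y powr (1 / real l)"
    using lower by (intro powr_mono2) auto
  finally show ?thesis .
qed

lemma root_le_if_le_power:
  fixes y K :: real
  assumes "0 \<le> y" and "y \<le> K ^ l" and "K > 0" and "l \<ge> 1"
  shows "y powr (1 / real l) \<le> K"
proof -
  have "y powr (1 / real l) \<le> (K ^ l) powr (1 / real l)"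
    using assms by (intro powr_mono2) auto
  also have "\<dots> = K"
    using assms by (simp add: powr_realpow[symmetric] powr_powr)
  finally show ?thesis .
qed

text \<open>These bounds make the lim inf and lim sup of Q(l)^(1/l) finite and larger than 1, so the
  hypothesis on x, stated through real_of_ereal and ln, does not degenerate to junk values.\<close>

lemma root_liminf_limsup_finite:
  fixes Q :: "nat \<Rightarrow> real" and K :: real
  assumes lower: "\<And>l. 2 ^ (l div 2) \<le> Q l" and upper: "\<And>l. Q l \<le> K ^ l"
  defines "M \<equiv> real_of_ereal (limsup (\<lambda>l. ereal (Q l powr (1 / real l))))"
    and "m \<equiv> real_of_ereal (liminf (\<lambda>l. ereal (Q l powr (1 / real l))))"
  shows "liminf (\<lambda>l. ereal (Q l powr (1 / real l))) = ereal m"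
    and "limsup (\<lambda>l. ereal (Q l powr (1 / real l))) = ereal M"
    and "1 < m" and "m \<le> M"
proof -
  define G where "G = (\<lambda>l. ereal (Q l powr (1 / real l)))"
  have Q_nonneg: "Q l \<ge> 0" for l
    using lower[of l] by (meson order_trans zero_le_numeral zero_le_power)
  have K: "K > 0"
    using lower[of 1] upper[of 1] by simp
  have lo: "ereal (2 powr (1 / 3)) \<le> liminf G"
    using root_ge_if_ge_power2[OF lower]
    by (intro Liminf_bounded) (auto simp: G_def eventually_sequentially)
  have hi: "limsup G \<le> ereal K"
    using root_le_if_le_power[OF Q_nonneg upper K]
    by (intro Limsup_bounded) (auto simp: G_def eventually_sequentially)
  have le: "liminf G \<le> limsup G"
    by (simp add: Liminf_le_Limsup)
  show liminf: "liminf (\<lambda>l. ereal (Q l powr (1 / real l))) = ereal m"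
    unfolding m_def G_def[symmetric] using lo le hi by (cases "liminf G") auto
  show limsup: "limsup (\<lambda>l. ereal (Q l powr (1 / real l))) = ereal M"
    unfolding M_def G_def[symmetric] using lo le hi by (cases "limsup G") auto
  have "2 powr (1 / 3) \<le> m"
    using lo liminf by (simp add: G_def)
  moreover have "(1::real) < 2 powr (1 / 3)"
    by simp
  ultimately show "1 < m"
    by linarith
  show "m \<le> M"
    using le liminf limsup by (simp add: G_def)
qed

lemma eventually_ln_less_if_limsup_root_less:
  fixes Q :: "nat \<Rightarrow> real"
  assumes Q_pos: "\<And>l. Q l > 0" and "limsup (\<lambda>l. ereal (Q l powr (1 / real l))) < ereal (exp s)"
  shows "eventually (\<lambda>l. ln (Q l) < s * real l) sequentially"
proof -
  have root: "Q l powr (1 / real l) = exp (ln (Q l) / real l)" for l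
    using Q_pos[of l] by (simp add: powr_def)
  have "eventually (\<lambda>l. Q l powr (1 / real l) < exp s \<and> l \<ge> 1) sequentially"
    using Limsup_lessD[OF assms(2)] by (simp add: eventually_conj)
  then show ?thesis
    by (rule eventually_mono) (auto simp: root pos_divide_less_eq mult.commute)
qed

lemma eventually_ln_greater_if_liminf_root_greater:
  fixes Q :: "nat \<Rightarrow> real"
  assumes Q_pos: "\<And>l. Q l > 0" and "ereal (exp s) < liminf (\<lambda>l. ereal (Q l powr (1 / real l)))"
  shows "eventually (\<lambda>l. s * real l < ln (Q l)) sequentially"
proof -
  have root: "Q l powr (1 / real l) = exp (ln (Q l) / real l)" for l
    using Q_pos[of l] by (simp add: powr_def)
  have "eventually (\<lambda>l. exp s < Q l powr (1 / real l) \<and> l \<ge> 1) sequentially"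
    using less_LiminfD[OF assms(2)] by (simp add: eventually_conj)
  then show ?thesis
    by (rule eventually_mono) (auto simp: root pos_less_divide_eq mult.commute)
qed

lemma ratio_tendsto_0_if_root_rates:
  fixes Q :: "nat \<Rightarrow> real" and r L :: "nat \<Rightarrow> nat" and x K :: real
  assumes lower: "\<And>l. 2 ^ (l div 2) \<le> Q l" and upper: "\<And>l. Q l \<le> K ^ l"
    and r: "filterlim r at_top sequentially" and rL: "\<And>k. x * real (r k) \<le> real (L k)" and x: "x > 0"
    and cond: "x > 1/2 * (ln (real_of_ereal (limsup (\<lambda>l. ereal (Q l powr (1 / real l)))))
                          / ln (real_of_ereal (liminf (\<lambda>l. ereal (Q l powr (1 / real l))))))"
  shows "(\<lambda>k. Q (r k) / Q (L k) ^ 2) \<longlonglongrightarrow> 0"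
proof -
  define M where "M = real_of_ereal (limsup (\<lambda>l. ereal (Q l powr (1 / real l))))"
  define m where "m = real_of_ereal (liminf (\<lambda>l. ereal (Q l powr (1 / real l))))"
  note finite = root_liminf_limsup_finite[OF lower upper, folded M_def m_def]
  have Q_pos: "Q l > 0" for l
    using lower[of l] by (meson less_le_trans zero_less_numeral zero_less_power)
  have "ln M / (2 * x) < ln m"
    using cond finite(3) x by (simp add: M_def m_def field_simps)
  then obtain sv where "ln M / (2 * x) < sv" and sv: "sv < ln m"
    using dense by blast
  then have sv_gt: "ln M < 2 * x * sv"
    using x by (simp add: pos_divide_less_eq mult.commute)
  then obtain su where su: "ln M < su" "su < 2 * x * sv"
    using dense by blast
  have "0 < ln M"
    using finite(3,4) by simp
  then have "0 < 2 * x * sv"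
    using sv_gt by linarith
  then have "sv > 0"
    using x by (simp add: zero_less_mult_iff)
  have "M > 0" and "m > 0"
    using finite(3,4) by linarith+
  then have "M < exp su" and "exp sv < m"
    using su(1) sv by (metis exp_less_mono exp_ln)+
  then have "eventually (\<lambda>l. ln (Q l) < su * real l) sequentially"
    and "eventually (\<lambda>l. sv * real l < ln (Q l)) sequentially"
    using finite(1,2) by (intro eventually_ln_less_if_limsup_root_less
        eventually_ln_greater_if_liminf_root_greater Q_pos; simp)+
  then show ?thesis
    by (rule ratio_tendsto_0_if_growth_rates[OF Q_pos _ _ r rL x \<open>sv > 0\<close> su(2)])
qed

lemma filterlim_at_top_if_ge_power2:
  fixes Q :: "nat \<Rightarrow> real"
  assumes lower: "\<And>l. 2 ^ (l div 2) \<le> Q l"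
  shows "filterlim Q at_top sequentially"
  unfolding filterlim_at_top
proof
  fix Z :: real
  define n where "n = nat \<lceil>Z\<rceil>"
  have "Z \<le> Q l" if "l \<ge> 2 * n" for l
  proof -
    have "n \<le> l div 2"
      using that by linarith
    then have "Z \<le> real (l div 2)"
      using real_nat_ceiling_ge[of Z] of_nat_mono[of n "l div 2"] by (simp add: n_def)
    also have "\<dots> \<le> 2 ^ (l div 2)"
      using less_exp[of "l div 2"] by (metis less_imp_le of_nat_le_iff of_nat_numeral of_nat_power)
    also have "\<dots> \<le> Q l"
      by (rule lower)
    finally show ?thesis .
  qed
  then show "eventually (\<lambda>l. Z \<le> Q l) sequentially"
    by (auto simp: eventually_sequentially)
qed

lemma ratio_tendsto_0:
  fixes Q :: "nat \<Rightarrow> real" and r L :: "nat \<Rightarrow> nat" and x K :: real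
  assumes lower: "\<And>l. 2 ^ (l div 2) \<le> Q l" and upper: "\<And>l. Q l \<le> K ^ l" and Q_mono: "mono Q"
    and r: "filterlim r at_top sequentially" and rL: "\<And>k. x * real (r k) \<le> real (L k)" and x: "x > 0"
    and cond: "x \<ge> 1 \<or> x > 1/2 * (ln (real_of_ereal (limsup (\<lambda>l. ereal (Q l powr (1 / real l)))))
                                   / ln (real_of_ereal (liminf (\<lambda>l. ereal (Q l powr (1 / real l))))))"
  shows "(\<lambda>k. Q (r k) / Q (L k) ^ 2) \<longlonglongrightarrow> 0"
  using cond
proof
  assume "x \<ge> 1"
  then have "real (r k) \<le> real (L k)" for k
    using rL[of k] mult_right_mono[of 1 x "real (r k)"] by linarith
  moreover have "Q l > 0" for l
    using lower[of l] by (meson less_le_trans zero_less_numeral zero_less_power)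
  ultimately show ?thesis
    using ratio_tendsto_0_if_mono[OF _ Q_mono filterlim_at_top_if_ge_power2[OF lower] r] by simp
qed (rule ratio_tendsto_0_if_root_rates[OF lower upper r rL x])

section \<open>Littlewood products from quadratic approximations\<close>

lemma dirichlet_with_congruence:
  fixes \<alpha> :: real and c T :: nat and u v :: int
  assumes c: "c \<ge> 1" and T: "T \<ge> 1"
  shows "\<exists>m n :: int. 1 \<le> m \<and> m \<le> int (c * T) \<and> \<bar>of_int m * \<alpha> - of_int n\<bar> < 1 / real T \<and>
           int c dvd u * n + v * m"
proof -
  define box where
    "box j = (\<lfloor>real T * frac (real j * \<alpha>)\<rfloor>, (u * \<lfloor>real j * \<alpha>\<rfloor> + v * int j) mod int c)" for j :: nat
  have "box ` {0..c * T} \<subseteq> {0..<int T} \<times> {0..<int c}"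
    using c T frac_lt_1 by (auto simp: box_def floor_less_iff)
  then have "card (box ` {0..c * T}) \<le> T * c"
    using card_mono[of "{0..<int T} \<times> {0..<int c}"] by (simp add: card_cartesian_product)
  then have "\<not> inj_on box {0..c * T}"
    by (intro pigeonhole) (simp add: mult.commute)
  then obtain i j where ij: "i \<le> c * T" "j \<le> c * T" "i < j" "box i = box j"
    unfolding inj_on_def by (metis atLeastAtMost_iff linorder_neqE_nat)
  define m where "m = int j - int i"
  define n where "n = \<lfloor>real j * \<alpha>\<rfloor> - \<lfloor>real i * \<alpha>\<rfloor>"
  have "\<lfloor>real T * frac (real i * \<alpha>)\<rfloor> = \<lfloor>real T * frac (real j * \<alpha>)\<rfloor>"
    using ij(4) by (simp add: box_def)
  then have "\<bar>real T * frac (real j * \<alpha>) - real T * frac (real i * \<alpha>)\<bar> < 1"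
    by linarith
  moreover have "of_int m * \<alpha> - of_int n = frac (real j * \<alpha>) - frac (real i * \<alpha>)"
    by (simp add: m_def n_def frac_def algebra_simps)
  ultimately have "real T * \<bar>of_int m * \<alpha> - of_int n\<bar> < 1"
    by (simp add: abs_mult flip: right_diff_distrib)
  then have "\<bar>of_int m * \<alpha> - of_int n\<bar> < 1 / real T"
    using T by (simp add: field_simps)
  moreover have "int c dvd u * n + v * m"
  proof -
    have "(u * \<lfloor>real j * \<alpha>\<rfloor> + v * int j) mod int c = (u * \<lfloor>real i * \<alpha>\<rfloor> + v * int i) mod int c"
      using ij(4) by (simp add: box_def)
    then show ?thesis
      by (simp add: mod_eq_dvd_iff m_def n_def algebra_simps)
  qed
  moreover have "1 \<le> m" "m \<le> int (c * T)"
    using ij by (auto simp: m_def simp flip: of_nat_mult)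
  ultimately show ?thesis
    by blast
qed


lemma quadratic_multiple_bound:
  fixes \<alpha> Kc :: real and c1 c0 m n k :: int and c :: nat
  assumes c1: "\<bar>of_int c1\<bar> \<le> Kc * real c" and c: "c \<ge> 1" and m: "m \<ge> 0"
    and k: "int c * k = c1 * n + c0 * m"
  shows "\<bar>of_int m * \<alpha>\<^sup>2 + of_int k\<bar>
           \<le> of_int m * \<bar>real c * \<alpha>\<^sup>2 + of_int c1 * \<alpha> + of_int c0\<bar> / real c
             + Kc * \<bar>of_int m * \<alpha> - of_int n\<bar>"
proof -
  define e where "e = of_int m * \<alpha> - of_int n"
  define P where "P = real c * \<alpha>\<^sup>2 + of_int c1 * \<alpha> + of_int c0"
  have "real c * (of_int m * \<alpha>\<^sup>2 + of_int k) = of_int m * P - of_int c1 * e"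
    using arg_cong[OF k, of real_of_int] by (simp add: e_def P_def algebra_simps power2_eq_square)
  then have "real c * \<bar>of_int m * \<alpha>\<^sup>2 + of_int k\<bar> \<le> \<bar>of_int m * P\<bar> + \<bar>of_int c1 * e\<bar>"
    by (metis abs_mult abs_of_nat abs_triangle_ineq4)
  also have "\<dots> \<le> of_int m * \<bar>P\<bar> + Kc * real c * \<bar>e\<bar>"
    using m c1 by (simp add: abs_mult mult_right_mono)
  finally show ?thesis
    using c by (simp add: e_def P_def field_simps)
qed

lemma int_combination_bounds:
  fixes \<alpha> :: real and C D m n :: int
  assumes m: "m \<ge> 1" and e: "\<bar>of_int m * \<alpha> - of_int n\<bar> \<le> 1"
    and C_e: "\<bar>of_int C\<bar> * \<bar>of_int m * \<alpha> - of_int n\<bar> < of_int m * \<bar>of_int C * \<alpha> + of_int D\<bar>"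
  shows "C * n + D * m \<noteq> 0"
    and "\<bar>of_int (C * n + D * m)\<bar> \<le> (\<bar>of_int C\<bar> * (\<bar>\<alpha>\<bar> + 1) + \<bar>of_int D\<bar>) * of_int m"
proof -
  define e where "e = of_int m * \<alpha> - of_int n"
  have m_real: "real_of_int m \<ge> 1"
    using m by simp
  have q: "of_int (C * n + D * m) = of_int m * (of_int C * \<alpha> + of_int D) - of_int C * e"
    by (simp add: e_def algebra_simps)
  then have "\<bar>real_of_int (C * n + D * m)\<bar> \<ge> of_int m * \<bar>of_int C * \<alpha> + of_int D\<bar> - \<bar>of_int C\<bar> * \<bar>e\<bar>"
    using m_real abs_triangle_ineq2[of "of_int m * (of_int C * \<alpha> + of_int D)" "of_int C * e"]
    by (simp add: abs_mult)
  then have "\<bar>real_of_int (C * n + D * m)\<bar> > 0"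
    using C_e[folded e_def] by linarith
  then show "C * n + D * m \<noteq> 0"
    by (metis abs_zero of_int_0 less_irrefl)
  have "\<bar>real_of_int (C * n + D * m)\<bar> \<le> of_int m * \<bar>of_int C * \<alpha> + of_int D\<bar> + \<bar>of_int C\<bar> * \<bar>e\<bar>"
    using q m_real abs_triangle_ineq4[of "of_int m * (of_int C * \<alpha> + of_int D)" "of_int C * e"]
    by (simp add: abs_mult)
  also have "\<dots> \<le> of_int m * (\<bar>of_int C\<bar> * \<bar>\<alpha>\<bar> + \<bar>of_int D\<bar>) + \<bar>of_int C\<bar> * \<bar>e\<bar>"
    using m_real abs_triangle_ineq[of "of_int C * \<alpha>" "of_int D"]
    by (intro add_right_mono mult_left_mono) (auto simp: abs_mult)
  also have "\<dots> \<le> (\<bar>of_int C\<bar> * (\<bar>\<alpha>\<bar> + 1) + \<bar>of_int D\<bar>) * of_int m"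
    using e m_real mult_left_mono[OF order_trans[OF e m_real], of "\<bar>of_int C\<bar>"]
    by (simp add: e_def algebra_simps)
  finally show "\<bar>of_int (C * n + D * m)\<bar> \<le> (\<bar>of_int C\<bar> * (\<bar>\<alpha>\<bar> + 1) + \<bar>of_int D\<bar>) * of_int m" .
qed

lemma littlewood_product_from_multiple:
  fixes \<alpha> \<beta> Kc :: real and A B C D c1 c0 m n k :: int and c :: nat
  assumes hom: "\<beta> * (of_int C * \<alpha> + of_int D) = of_int A * \<alpha> + of_int B"
    and c1: "\<bar>of_int c1\<bar> \<le> Kc * real c" and c: "c \<ge> 1"
    and m: "m \<ge> 1" and k: "int c * k = c1 * n + c0 * m"
  defines "e \<equiv> of_int m * \<alpha> - of_int n"
    and "P \<equiv> real c * \<alpha>\<^sup>2 + of_int c1 * \<alpha> + of_int c0"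
  assumes e: "\<bar>e\<bar> \<le> 1" and C_e: "\<bar>of_int C\<bar> * \<bar>e\<bar> < of_int m * \<bar>of_int C * \<alpha> + of_int D\<bar>"
  shows "\<exists>q\<ge>1. real q * nint_dist (real q * \<alpha>) * nint_dist (real q * \<beta>)
           \<le> (\<bar>of_int C\<bar> * (\<bar>\<alpha>\<bar> + 1) + \<bar>of_int D\<bar>) * of_int m
             * (\<bar>of_int C\<bar> * of_int m * \<bar>P\<bar> / real c + (\<bar>of_int C\<bar> * (Kc + \<bar>\<alpha>\<bar>) + \<bar>of_int D\<bar>) * \<bar>e\<bar>)
             * (\<bar>of_int A - of_int C * \<beta>\<bar> * \<bar>e\<bar>)"
proof -
  \<comment> \<open>With q = C n + D m the error of q \<beta> is a multiple of e, while that of q \<alpha>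
    is controlled by the value P at \<alpha> of the quadratic form.\<close>
  define q where "q = C * n + D * m"
  define p where "p = D * n - C * k"
  define p' where "p' = A * n + B * m"
  define w where "w = of_int m * \<alpha>\<^sup>2 + of_int k"
  define K1 where "K1 = \<bar>of_int C\<bar> * (\<bar>\<alpha>\<bar> + 1) + \<bar>of_int D\<bar>"
  define K2 where "K2 = \<bar>of_int C\<bar> * (Kc + \<bar>\<alpha>\<bar>) + \<bar>of_int D\<bar>"
  define K3 where "K3 = \<bar>of_int A - of_int C * \<beta>\<bar>"
  have n: "of_int n = of_int m * \<alpha> - e"
    by (simp add: e_def)
  have "of_int q * \<alpha> - of_int p = of_int C * (w - \<alpha> * e) + of_int D * e"
    by (simp add: q_def p_def w_def n algebra_simps power2_eq_square)
  then have "\<bar>of_int q * \<alpha> - of_int p\<bar> \<le> \<bar>of_int C\<bar> * \<bar>w - \<alpha> * e\<bar> + \<bar>of_int D\<bar> * \<bar>e\<bar>"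
    using abs_triangle_ineq by (metis abs_mult)
  also have "\<dots> \<le> \<bar>of_int C\<bar> * (\<bar>w\<bar> + \<bar>\<alpha>\<bar> * \<bar>e\<bar>) + \<bar>of_int D\<bar> * \<bar>e\<bar>"
    using abs_triangle_ineq4[of w "\<alpha> * e"] by (simp add: abs_mult mult_left_mono)
  also have "\<dots> \<le> \<bar>of_int C\<bar> * (of_int m * \<bar>P\<bar> / real c + Kc * \<bar>e\<bar> + \<bar>\<alpha>\<bar> * \<bar>e\<bar>) + \<bar>of_int D\<bar> * \<bar>e\<bar>"
    using quadratic_multiple_bound[OF c1 c _ k] m by (simp add: w_def e_def P_def mult_left_mono)
  finally have qa: "\<bar>of_int q * \<alpha> - of_int p\<bar> \<le> \<bar>of_int C\<bar> * of_int m * \<bar>P\<bar> / real c + K2 * \<bar>e\<bar>"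
    by (simp add: K2_def algebra_simps)
  have "of_int q * \<beta> - of_int p'
          = of_int m * (\<beta> * (of_int C * \<alpha> + of_int D) - (of_int A * \<alpha> + of_int B))
            + (of_int A - of_int C * \<beta>) * e"
    by (simp add: q_def p'_def n algebra_simps)
  then have qb: "\<bar>of_int q * \<beta> - of_int p'\<bar> = K3 * \<bar>e\<bar>"
    by (simp add: hom K3_def abs_mult)
  note q = int_combination_bounds[OF m, of \<alpha> n C D, folded e_def q_def K1_def, OF e C_e]
  have "real (nat \<bar>q\<bar>) * nint_dist (real (nat \<bar>q\<bar>) * \<alpha>) * nint_dist (real (nat \<bar>q\<bar>) * \<beta>)
          \<le> \<bar>real_of_int q\<bar> * \<bar>of_int q * \<alpha> - of_int p\<bar> * \<bar>of_int q * \<beta> - of_int p'\<bar>"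
    using nint_dist_abs_mult_le nint_dist_nonneg by (intro mult_mono) auto
  also have "\<dots> \<le> K1 * of_int m * (\<bar>of_int C\<bar> * of_int m * \<bar>P\<bar> / real c + K2 * \<bar>e\<bar>) * (K3 * \<bar>e\<bar>)"
    using q(2) qa qb order_trans[OF abs_ge_zero q(2)] order_trans[OF abs_ge_zero qa]
    by (intro mult_mono) (auto simp: K3_def)
  moreover have "nat \<bar>q\<bar> \<ge> 1"
    using q(1) by simp
  ultimately show ?thesis
    unfolding K1_def K2_def K3_def by (meson order_trans)
qed

lemma littlewood_product_le_scale:
  fixes \<alpha> \<beta> Kc :: real and A B C D c1 c0 :: int and c T :: nat
  assumes hom: "\<beta> * (of_int C * \<alpha> + of_int D) = of_int A * \<alpha> + of_int B"
    and c1: "\<bar>of_int c1\<bar> \<le> Kc * real c" and c: "c \<ge> 1" and T: "T \<ge> 1"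
    and C_T: "\<bar>of_int C\<bar> < \<bar>of_int C * \<alpha> + of_int D\<bar> * real T"
  defines "P \<equiv> real c * \<alpha>\<^sup>2 + of_int c1 * \<alpha> + of_int c0"
  shows "\<exists>q\<ge>1. real q * nint_dist (real q * \<alpha>) * nint_dist (real q * \<beta>)
           \<le> (\<bar>of_int C\<bar> * (\<bar>\<alpha>\<bar> + 1) + \<bar>of_int D\<bar>) * \<bar>of_int A - of_int C * \<beta>\<bar>
             * (\<bar>of_int C\<bar> * (real c * real T * \<bar>P\<bar>) + (\<bar>of_int C\<bar> * (Kc + \<bar>\<alpha>\<bar>) + \<bar>of_int D\<bar>) * (real c / real T))"
proof -
  define K1 where "K1 = \<bar>of_int C\<bar> * (\<bar>\<alpha>\<bar> + 1) + \<bar>of_int D\<bar>"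
  define K2 where "K2 = \<bar>of_int C\<bar> * (Kc + \<bar>\<alpha>\<bar>) + \<bar>of_int D\<bar>"
  define K3 where "K3 = \<bar>of_int A - of_int C * \<beta>\<bar>"
  have Kc: "Kc \<ge> 0"
    using order_trans[OF abs_ge_zero c1] c by (simp add: zero_le_mult_iff)
  obtain m n :: int where m: "1 \<le> m" "m \<le> int (c * T)"
    and e: "\<bar>of_int m * \<alpha> - of_int n\<bar> < 1 / real T" and "int c dvd c1 * n + c0 * m"
    using dirichlet_with_congruence[OF c T] by blast
  then obtain k where k: "int c * k = c1 * n + c0 * m"
    by (metis dvdE)
  define e where "e = of_int m * \<alpha> - of_int n"
  have "real_of_int m \<le> real_of_int (int (c * T))"
    using m(2) by (simp only: of_int_le_iff)
  then have m_real: "1 \<le> real_of_int m" "real_of_int m \<le> real c * real T"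
    using m(1) by simp_all
  have e_le: "\<bar>e\<bar> \<le> 1 / real T" "1 / real T \<le> 1"
    using e T by (simp_all add: e_def)
  have "\<bar>of_int C\<bar> * \<bar>e\<bar> \<le> \<bar>of_int C\<bar> / real T"
    using mult_left_mono[OF e_le(1), of "\<bar>of_int C\<bar>"] by simp
  also have "\<dots> < \<bar>of_int C * \<alpha> + of_int D\<bar>"
    using C_T T by (simp add: field_simps)
  also have "\<dots> \<le> of_int m * \<bar>of_int C * \<alpha> + of_int D\<bar>"
    using mult_right_mono[OF m_real(1)] by simp
  finally obtain q where q: "q \<ge> 1"
    "real q * nint_dist (real q * \<alpha>) * nint_dist (real q * \<beta>)
       \<le> K1 * of_int m * (\<bar>of_int C\<bar> * of_int m * \<bar>P\<bar> / real c + K2 * \<bar>e\<bar>) * (K3 * \<bar>e\<bar>)"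
    using littlewood_product_from_multiple[OF hom c1 c m(1) k] e_le
    unfolding K1_def K2_def K3_def P_def e_def by fastforce
  have "of_int m * of_int m * \<bar>P\<bar> * \<bar>e\<bar> / real c \<le> (real c * real T) * (real c * real T) * \<bar>P\<bar> * (1 / real T) / real c"
    using m_real e_le c by (intro divide_right_mono mult_mono) auto
  also have "\<dots> = real c * real T * \<bar>P\<bar>"
    using T c by (simp add: field_simps power2_eq_square)
  finally have main_term: "of_int m * of_int m * \<bar>P\<bar> * \<bar>e\<bar> / real c \<le> real c * real T * \<bar>P\<bar>" .
  have "of_int m * \<bar>e\<bar> * \<bar>e\<bar> \<le> (real c * real T) * (1 / real T) * (1 / real T)"
    using m_real e_le by (intro mult_mono) auto
  then have error_term: "of_int m * \<bar>e\<bar> * \<bar>e\<bar> \<le> real c / real T"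
    using T by (simp add: field_simps power2_eq_square)
  have "K1 * of_int m * (\<bar>of_int C\<bar> * of_int m * \<bar>P\<bar> / real c + K2 * \<bar>e\<bar>) * (K3 * \<bar>e\<bar>)
          = K1 * K3 * (\<bar>of_int C\<bar> * (of_int m * of_int m * \<bar>P\<bar> * \<bar>e\<bar> / real c) + K2 * (of_int m * \<bar>e\<bar> * \<bar>e\<bar>))"
    by (simp add: algebra_simps)
  also have "\<dots> \<le> K1 * K3 * (\<bar>of_int C\<bar> * (real c * real T * \<bar>P\<bar>) + K2 * (real c / real T))"
    using main_term error_term Kc by (intro mult_left_mono add_mono) (auto simp: K1_def K2_def K3_def)
  finally show ?thesis
    using q unfolding K1_def K2_def K3_def by (meson order_trans)
qed

lemma littlewood_product_small:
  fixes \<alpha> \<beta> Kc t :: real and A B C D c1 c0 :: int and c :: nat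
  assumes hom: "\<beta> * (of_int C * \<alpha> + of_int D) = of_int A * \<alpha> + of_int B"
    and c1: "\<bar>of_int c1\<bar> \<le> Kc * real c" and c: "c \<ge> 1"
    and P: "real c ^ 2 * \<bar>real c * \<alpha>\<^sup>2 + of_int c1 * \<alpha> + of_int c0\<bar> \<le> t\<^sup>2"
    and t: "0 < t" "t \<le> 1" and C_t: "\<bar>of_int C\<bar> * t < \<bar>of_int C * \<alpha> + of_int D\<bar>"
  shows "\<exists>q\<ge>1. real q * nint_dist (real q * \<alpha>) * nint_dist (real q * \<beta>)
           \<le> (\<bar>of_int C\<bar> * (\<bar>\<alpha>\<bar> + 1) + \<bar>of_int D\<bar>) * \<bar>of_int A - of_int C * \<beta>\<bar>
             * (2 * \<bar>of_int C\<bar> + (\<bar>of_int C\<bar> * (Kc + \<bar>\<alpha>\<bar>) + \<bar>of_int D\<bar>)) * t"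
proof -
  define K1 where "K1 = \<bar>of_int C\<bar> * (\<bar>\<alpha>\<bar> + 1) + \<bar>of_int D\<bar>"
  define K2 where "K2 = \<bar>of_int C\<bar> * (Kc + \<bar>\<alpha>\<bar>) + \<bar>of_int D\<bar>"
  define K3 where "K3 = \<bar>of_int A - of_int C * \<beta>\<bar>"
  define P where "P = real c * \<alpha>\<^sup>2 + of_int c1 * \<alpha> + of_int c0"
  define T where "T = nat \<lceil>real c / t\<rceil>"
  have c_t: "real c / t \<ge> 1"
    using c t by (simp add: field_simps)
  then have T_ge: "real T \<ge> real c / t" and T_le: "real T \<le> 2 * real c / t"
    unfolding T_def by linarith+
  then have T: "T \<ge> 1"
    using c_t by linarith
  have "1 / t \<le> real c / t"
    using c t by (simp add: divide_right_mono)
  then have "1 / t \<le> real T"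
    using T_ge by linarith
  have "\<bar>of_int C\<bar> < \<bar>of_int C * \<alpha> + of_int D\<bar> * (1 / t)"
    using C_t t by (simp add: field_simps)
  also have "\<dots> \<le> \<bar>of_int C * \<alpha> + of_int D\<bar> * real T"
    using \<open>1 / t \<le> real T\<close> by (rule mult_left_mono) simp
  finally obtain q where q: "q \<ge> 1"
      "real q * nint_dist (real q * \<alpha>) * nint_dist (real q * \<beta>)
         \<le> K1 * K3 * (\<bar>of_int C\<bar> * (real c * real T * \<bar>P\<bar>) + K2 * (real c / real T))"
    using littlewood_product_le_scale[OF hom c1 c T] unfolding K1_def K2_def K3_def P_def by blast
  have "real c * real T * \<bar>P\<bar> = real c ^ 2 * \<bar>P\<bar> * (real T / real c)"
    using c by (simp add: field_simps power2_eq_square)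
  also have "\<dots> \<le> t\<^sup>2 * (2 / t)"
    using P T_le c by (intro mult_mono) (auto simp: P_def field_simps)
  finally have "real c * real T * \<bar>P\<bar> \<le> 2 * t"
    using t by (simp add: power2_eq_square)
  moreover have "real c / real T \<le> t"
    using T_ge t T by (simp add: field_simps)
  moreover have "K2 \<ge> 0"
    using order_trans[OF abs_ge_zero c1] c by (simp add: K2_def zero_le_mult_iff)
  ultimately have "K1 * K3 * (\<bar>of_int C\<bar> * (real c * real T * \<bar>P\<bar>) + K2 * (real c / real T))
                     \<le> K1 * K3 * (\<bar>of_int C\<bar> * (2 * t) + K2 * t)"
    by (intro mult_left_mono add_mono) (auto simp: K1_def K3_def)
  also have "\<dots> = K1 * K3 * (2 * \<bar>of_int C\<bar> + K2) * t"
    by (simp add: algebra_simps)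
  finally show ?thesis
    using q unfolding K1_def K2_def K3_def by (meson order_trans)
qed

lemma INF_eq_0_if_arbitrarily_small:
  fixes f :: "nat \<Rightarrow> real"
  assumes nonneg: "\<And>q. q \<ge> 1 \<Longrightarrow> f q \<ge> 0"
    and small: "\<And>\<eta>. \<eta> > 0 \<Longrightarrow> \<exists>q\<ge>1. f q < \<eta>"
  shows "(INF q\<in>{1..}. f q) = 0"
proof (rule antisym)
  have "bdd_below (f ` {1..})"
    using nonneg by (intro bdd_belowI2[of _ 0]) simp
  then have "(INF q\<in>{1..}. f q) < \<eta>" if "\<eta> > 0" for \<eta>
    using small[OF that] by (auto simp: cINF_less_iff)
  then show "(INF q\<in>{1..}. f q) \<le> 0"
    by (meson less_irrefl not_le)
  show "(INF q\<in>{1..}. f q) \<ge> 0"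
    using nonneg by (auto intro: cINF_greatest)
qed

lemma INF_littlewood_eq_0_if_quadratic_approx:
  fixes \<alpha> \<beta> Kc :: real and A B C D :: int
  assumes hom: "\<beta> * (of_int C * \<alpha> + of_int D) = of_int A * \<alpha> + of_int B"
    and hom_nz: "of_int C * \<alpha> + of_int D \<noteq> 0"
    and quadratic: "\<And>t. t > 0 \<Longrightarrow> \<exists>(c::nat) (c1::int) (c0::int). c \<ge> 1 \<and> \<bar>of_int c1\<bar> \<le> Kc * real c \<and>
                      real c ^ 2 * \<bar>real c * \<alpha>\<^sup>2 + of_int c1 * \<alpha> + of_int c0\<bar> \<le> t\<^sup>2"
  shows "(INF q\<in>{1::nat..}. real q * nint_dist (real q * \<alpha>) * nint_dist (real q * \<beta>)) = 0"
proof (rule INF_eq_0_if_arbitrarily_small)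
  show "real q * nint_dist (real q * \<alpha>) * nint_dist (real q * \<beta>) \<ge> 0" for q
    using nint_dist_nonneg by simp
  fix \<eta> :: real
  assume \<eta>: "\<eta> > 0"
  define K where "K = (\<bar>of_int C\<bar> * (\<bar>\<alpha>\<bar> + 1) + \<bar>of_int D\<bar>) * \<bar>of_int A - of_int C * \<beta>\<bar>
                       * (2 * \<bar>of_int C\<bar> + (\<bar>of_int C\<bar> * (Kc + \<bar>\<alpha>\<bar>) + \<bar>of_int D\<bar>))"
  define t where "t = min 1 (min (\<bar>of_int C * \<alpha> + of_int D\<bar> / (\<bar>of_int C\<bar> + 1)) (\<eta> / (\<bar>K\<bar> + 1)))"
  have t: "0 < t" "t \<le> 1"
    using hom_nz \<eta> by (auto simp: t_def)
  have "t \<le> \<bar>of_int C * \<alpha> + of_int D\<bar> / (\<bar>of_int C\<bar> + 1)"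
    unfolding t_def by (intro min.coboundedI2 min.cobounded1)
  then have "(\<bar>of_int C\<bar> + 1) * t \<le> \<bar>of_int C * \<alpha> + of_int D\<bar>"
    by (simp add: field_simps)
  then have C_t: "\<bar>of_int C\<bar> * t < \<bar>of_int C * \<alpha> + of_int D\<bar>"
    using t by (simp add: algebra_simps)
  have "K * t \<le> \<bar>K\<bar> * (\<eta> / (\<bar>K\<bar> + 1))"
    using t by (intro mult_mono) (auto simp: t_def)
  also have "\<dots> < \<eta>"
    using \<eta> by (simp add: field_simps)
  finally have Kt: "K * t < \<eta>" .
  obtain c c1 c0 where "c \<ge> 1" "\<bar>of_int c1\<bar> \<le> Kc * real c"
      "real c ^ 2 * \<bar>real c * \<alpha>\<^sup>2 + of_int c1 * \<alpha> + of_int c0\<bar> \<le> t\<^sup>2"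
    using quadratic[OF t(1)] by blast
  from littlewood_product_small[OF hom this(2,1,3) t C_t]
  show "\<exists>q\<ge>1. real q * nint_dist (real q * \<alpha>) * nint_dist (real q * \<beta>) < \<eta>"
    using Kt unfolding K_def by (meson le_less_trans)
qed

section \<open>Repetitions in the continued fraction expansion\<close>

context cf_denominators
begin

lemma repetition_ratio_tendsto_0:
  fixes x :: rat and U :: "nat \<Rightarrow> nat list" and c :: real
  assumes c: "c > 0" "\<And>n. c * real (cf_q a (Suc n)) \<le> real (cf_q a n)"
    and x: "x > 0"
    and lengths: "\<forall>k\<ge>1. length (U (Suc k)) > length (U k)"
    and cond: "x \<ge> 1 \<or> real_of_rat x >
                 1/2 * (ln (real_of_ereal (limsup (\<lambda>l. ereal (real (cf_q a l) powr (1 / real l)))))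
                        / ln (real_of_ereal (liminf (\<lambda>l. ereal (real (cf_q a l) powr (1 / real l))))))"
  shows "(\<lambda>k. real (cf_q a (length (U k))) / real (cf_q a (length (word_pow (U k) x))) ^ 2)
           \<longlonglongrightarrow> 0"
proof (rule ratio_tendsto_0[where Q = "\<lambda>l. real (cf_q a l)" and K = "1 / c" and x = "real_of_rat x"])
  show "filterlim (\<lambda>k. length (U k)) at_top sequentially"
    using lengths by (intro filterlim_at_top_if_Suc_less) auto
  show "real_of_rat x * real (length (U k)) \<le> real (length (word_pow (U k) x))" for k
    by (rule length_word_pow_ge[OF x])
  show "2 ^ (l div 2) \<le> real (cf_q a l)" for l
    using cf_q_ge_power2[of l] by (metis of_nat_le_iff of_nat_numeral of_nat_power)
  show "real (cf_q a l) \<le> (1 / c) ^ l" for l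
    by (rule cf_q_le_power[OF c])
  show "mono (\<lambda>l. real (cf_q a l))"
    by (simp add: cf_q_mono monoI)
qed (use x cond in \<open>simp_all add: of_rat_less_eq[of 1 x, simplified]\<close>)

end

context cf_expansion
begin

lemma quadratic_approx_from_repetitions:
  fixes x :: rat and U :: "nat \<Rightarrow> nat list" and c t :: real
  assumes c: "c > 0" "\<And>n. c * real (cf_q a (Suc n)) \<le> real (cf_q a n)"
    and x: "x > 0"
    and prefix: "\<forall>k\<ge>1. cf_begins_with a (U k @ word_pow (U k) x)"
    and lengths: "\<forall>k\<ge>1. length (U (Suc k)) > length (U k)"
    and cond: "x \<ge> 1 \<or> real_of_rat x >
                 1/2 * (ln (real_of_ereal (limsup (\<lambda>l. ereal (real (cf_q a l) powr (1 / real l)))))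
                        / ln (real_of_ereal (liminf (\<lambda>l. ereal (real (cf_q a l) powr (1 / real l))))))"
    and t: "t > 0"
  shows "\<exists>(c2::nat) (c1::int) (c0::int). c2 \<ge> 1 \<and> \<bar>of_int c1\<bar> \<le> 1 / c * real c2 \<and>
           real c2 ^ 2 * \<bar>real c2 * \<alpha>\<^sup>2 + of_int c1 * \<alpha> + of_int c0\<bar> \<le> t\<^sup>2"
proof -
  define r where "r k = length (U k)" for k
  define L where "L k = length (word_pow (U k) x)" for k
  have "t\<^sup>2 / 2 > 0"
    using t by simp
  with repetition_ratio_tendsto_0[OF c x lengths cond]
  have "eventually (\<lambda>k. real (cf_q a (r k)) / real (cf_q a (L k)) ^ 2 < t\<^sup>2 / 2) sequentially"
    unfolding r_def L_def by (rule order_tendstoD(2))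
  moreover have "filterlim r at_top sequentially"
    using lengths unfolding r_def by (intro filterlim_at_top_if_Suc_less) auto
  then have "eventually (\<lambda>k. k \<ge> 1 \<and> r k \<ge> 1) sequentially"
    by (simp add: filterlim_at_top eventually_conj)
  ultimately obtain k where k: "k \<ge> 1" "r k \<ge> 1"
    and small: "2 * real (cf_q a (r k)) / real (cf_q a (L k)) ^ 2 \<le> t\<^sup>2"
    using eventually_happens'[OF sequentially_bot eventually_conj] by (force simp: field_simps)
  have "U k \<noteq> []"
    using k(2) by (auto simp: r_def)
  have "real_of_rat x * real (r k) \<le> real (L k)"
    unfolding r_def L_def by (rule length_word_pow_ge[OF x])
  moreover have "0 < real_of_rat x * real (r k)"
    using x k(2) by simp
  ultimately have "L k \<ge> 1"
    by linarith
  moreover have "\<forall>i\<in>{1..L k}. a (r k + i) = a i"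
    using cf_begins_with_word_pow_periodic[OF prefix[rule_format, OF k(1)] \<open>U k \<noteq> []\<close>]
    by (simp add: r_def L_def)
  ultimately show ?thesis
    using periodic_quadratic_approx_coeffs[OF c k(2)] small by (meson order_trans)
qed

end

theorem theorem4:
  fixes a :: "nat \<Rightarrow> nat" and \<alpha> :: real and x :: rat and U :: "nat \<Rightarrow> nat list"
  assumes pos: "\<forall>n\<ge>1. a n \<ge> 1"
    and alpha_cf: "(\<lambda>n. real (cf_p a n) / real (cf_q a n)) \<longlonglongrightarrow> \<alpha>"
    and bad: "\<alpha> \<in> Bad"
    and xpos: "x > 0"
    and prefix: "\<forall>k\<ge>1. cf_begins_with a (U k @ word_pow (U k) x)"
    and lengths: "\<forall>k\<ge>1. length (U (Suc k)) > length (U k)"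
    and cond: "let M = real_of_ereal (limsup (\<lambda>l. ereal (real (cf_q a l) powr (1 / real l))));
                   m = real_of_ereal (liminf (\<lambda>l. ereal (real (cf_q a l) powr (1 / real l))))
               in x \<ge> 1 \<or> real_of_rat x > 1/2 * (ln M / ln m)"
  shows "\<forall>\<beta>. (\<exists>A B C D :: int. A * D - B * C \<noteq> 0 \<and>
                 \<beta> = (of_int A * \<alpha> + of_int B) / (of_int C * \<alpha> + of_int D)) \<longrightarrow>
             (INF q\<in>{1::nat..}. real q * nint_dist (real q * \<alpha>) * nint_dist (real q * \<beta>)) = 0"
proof (intro allI impI)
  fix \<beta> :: real
  assume "\<exists>A B C D :: int. A * D - B * C \<noteq> 0 \<and> \<beta> = (of_int A * \<alpha> + of_int B) / (of_int C * \<alpha> + of_int D)"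
  then obtain A B C D :: int where det: "A * D - B * C \<noteq> 0"
    and \<beta>: "\<beta> = (of_int A * \<alpha> + of_int B) / (of_int C * \<alpha> + of_int D)"
    by blast
  interpret cf_expansion a \<alpha>
    using pos alpha_cf by unfold_locales
  obtain c where c: "c > 0" "\<And>q. q \<ge> 1 \<Longrightarrow> c \<le> real q * nint_dist (real q * \<alpha>)"
    using Bad_lower_bound[OF bad] by blast
  have nz: "of_int C * \<alpha> + of_int D \<noteq> 0"
    using homography_denominator_nonzero[OF Bad_not_rational[OF bad] det] .
  then have hom: "\<beta> * (of_int C * \<alpha> + of_int D) = of_int A * \<alpha> + of_int B"
    by (simp add: \<beta>)
  have "x \<ge> 1 \<or> real_of_rat x >
          1/2 * (ln (real_of_ereal (limsup (\<lambda>l. ereal (real (cf_q a l) powr (1 / real l)))))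
                 / ln (real_of_ereal (liminf (\<lambda>l. ereal (real (cf_q a l) powr (1 / real l))))))"
    using cond by (simp only: Let_def)
  note quadratic = quadratic_approx_from_repetitions[OF c(1) Bad_cf_q_Suc_le[OF c(2)] xpos prefix lengths this]
  show "(INF q\<in>{1::nat..}. real q * nint_dist (real q * \<alpha>) * nint_dist (real q * \<beta>)) = 0"
    by (rule INF_littlewood_eq_0_if_quadratic_approx[OF hom nz quadratic])
qed

end
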